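(* Let $I_A$ and $I_B$ be two MatP instances with the same underlying graph $G=(W\cup F,E)$ that differ only in the preference order of a single agent $x$, let $e=\{x,y\}\in E$, and let $I_H$ be a hybrid instance of $(I_A,I_B)$ with respect to $e$. Then: (1) there exists a robust popular matching with respect to $I_A$ and $I_B$ containing $e$ if and only if there exists a popular matching for $I_H$ containing $e$; (2) there exists a robust dominant matching with respect to $I_A$ and $I_B$ containing $e$ if and only if there exists a dominant matching for $I_H$ containing $e$.
   Context: An instance $I$ of matchings under preferences (MatP) consists of a bipartite graph $G^I=(W\cup F,E^I)$ with disjoint finite vertex sets $W$ (workers) and $F$ (firms), whose elements are called agents, together with, for each agent $x$, a strict linear order $\succ_x^I$ (preference order) over the set $N_x^I$ of neighbors of $x$ in $G^I$. A matching is a set of pairwise disjoint edges; $M(x)$ denotes the partner of a matched agent $x$. Agent $x$ prefers $M$ over $M'$ if $x$ is matched in $M$ and unmatched in $M'$, or matched in both with $M(x)\succ_x M'(x)$. Define $\mathrm{vote}^I_x(M,M')=1$ if $x$ prefers $M$ over $M'$, $-1$ if $x$ prefers $M'$ over $M$, and $0$ otherwise, and the popularity margin $\phi^I(M,M')=\sum_{x\in W\cup F}\mathrm{vote}^I_x(M,M')$. A matching $M$ of $G^I$ is popular for $I$ if $\phi^I(M,M')\ge 0$ for every matching $M'$ of $G^I$; it is dominant for $I$ if it is popular and $\phi^I(M,M')>0$ for every matching $M'$ of $G^I$ with $|M'|>|M|$. For two instances $I_A,I_B$ on the same agent sets, a matching is robust popular (resp. robust dominant) with respect to $I_A$ and $I_B$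 if it is popular (resp. dominant) for both $I_A$ and $I_B$. Hybrid instance: suppose $I_A,I_B$ have the same graph $G$ and differ only in the preferences of agent $x$, and let $e=\{x,y\}\in E$. Let $P^A=\{z: z\succ_x^{I_A} y\}$ and $P^B=\{z: z\succ_x^{I_B} y\}$. A hybrid instance $I_H$ of $(I_A,I_B)$ with respect to $e$ is the MatP instance on $G$ in which every agent $z\neq x$ has preference order $\succ_z^{I_A}$, and $x$ has any linear order $\succ'$ on $N_x$ such that $z\succ' y$ for all $z\in P^A\cup P^B$ and $y\succ' z$ for all $z\in N_x\setminus(P^A\cup P^B\cup\{y\})$. *)

theory Defs
  imports Main
begin

text \<open>A MatP instance: workers W, firms F (disjoint, finite), an edge set E of
bipartite edges {w,f} with w in W, f in F, and preferences P, where
P z a b means a \<succ>_z b.\<close>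

definition nbrs :: "'a set set \<Rightarrow> 'a \<Rightarrow> 'a set" where
  "nbrs E z = {y. {z, y} \<in> E}"

definition bip_graph :: "'a set \<Rightarrow> 'a set \<Rightarrow> 'a set set \<Rightarrow> bool" where
  "bip_graph W F E \<longleftrightarrow> finite W \<and> finite F \<and> W \<inter> F = {} \<and>
     (\<forall>e\<in>E. \<exists>w\<in>W. \<exists>f\<in>F. e = {w, f})"

definition strict_linear_on :: "'a set \<Rightarrow> ('a \<Rightarrow> 'a \<Rightarrow> bool) \<Rightarrow> bool" where
  "strict_linear_on S R \<longleftrightarrow>
     (\<forall>a\<in>S. \<not> R a a) \<and>
     (\<forall>a\<in>S. \<forall>b\<in>S. \<forall>c\<in>S. R a b \<longrightarrow> R b c \<longrightarrow> R a c) \<and>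
     (\<forall>a\<in>S. \<forall>b\<in>S. a \<noteq> b \<longrightarrow> R a b \<or> R b a)"

definition matp_instance ::
  "'a set \<Rightarrow> 'a set \<Rightarrow> 'a set set \<Rightarrow> ('a \<Rightarrow> 'a \<Rightarrow> 'a \<Rightarrow> bool) \<Rightarrow> bool" where
  "matp_instance W F E P \<longleftrightarrow> bip_graph W F E \<and>
     (\<forall>z\<in>W \<union> F. strict_linear_on (nbrs E z) (P z))"

definition is_matching :: "'a set set \<Rightarrow> 'a set set \<Rightarrow> bool" where
  "is_matching E M \<longleftrightarrow> M \<subseteq> E \<and> (\<forall>e\<in>M. \<forall>e'\<in>M. e \<noteq> e' \<longrightarrow> e \<inter> e' = {})"

definition matched :: "'a set set \<Rightarrow> 'a \<Rightarrow> bool" where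
  "matched M z \<longleftrightarrow> (\<exists>e\<in>M. z \<in> e)"

definition partner :: "'a set set \<Rightarrow> 'a \<Rightarrow> 'a" where
  "partner M z = (THE y. {z, y} \<in> M)"

definition prefers ::
  "('a \<Rightarrow> 'a \<Rightarrow> 'a \<Rightarrow> bool) \<Rightarrow> 'a \<Rightarrow> 'a set set \<Rightarrow> 'a set set \<Rightarrow> bool" where
  "prefers P z M M' \<longleftrightarrow>
     (matched M z \<and> \<not> matched M' z) \<or>
     (matched M z \<and> matched M' z \<and> P z (partner M z) (partner M' z))"

definition vote ::
  "('a \<Rightarrow> 'a \<Rightarrow> 'a \<Rightarrow> bool) \<Rightarrow> 'a \<Rightarrow> 'a set set \<Rightarrow> 'a set set \<Rightarrow> int" where
  "vote P z M M' = (if prefers P z M M' then 1 else if prefers P z M' M then -1 else 0)"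

definition margin ::
  "'a set \<Rightarrow> 'a set \<Rightarrow> ('a \<Rightarrow> 'a \<Rightarrow> 'a \<Rightarrow> bool) \<Rightarrow> 'a set set \<Rightarrow> 'a set set \<Rightarrow> int" where
  "margin W F P M M' = (\<Sum>z\<in>W \<union> F. vote P z M M')"

definition popular ::
  "'a set \<Rightarrow> 'a set \<Rightarrow> 'a set set \<Rightarrow> ('a \<Rightarrow> 'a \<Rightarrow> 'a \<Rightarrow> bool) \<Rightarrow> 'a set set \<Rightarrow> bool" where
  "popular W F E P M \<longleftrightarrow> is_matching E M \<and>
     (\<forall>M'. is_matching E M' \<longrightarrow> margin W F P M M' \<ge> 0)"

definition dominant ::
  "'a set \<Rightarrow> 'a set \<Rightarrow> 'a set set \<Rightarrow> ('a \<Rightarrow> 'a \<Rightarrow> 'a \<Rightarrow> bool) \<Rightarrow> 'a set set \<Rightarrow> bool" where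
  "dominant W F E P M \<longleftrightarrow> popular W F E P M \<and>
     (\<forall>M'. is_matching E M' \<longrightarrow> card M' > card M \<longrightarrow> margin W F P M M' > 0)"

definition hybrid ::
  "'a set set \<Rightarrow> ('a \<Rightarrow> 'a \<Rightarrow> 'a \<Rightarrow> bool) \<Rightarrow> ('a \<Rightarrow> 'a \<Rightarrow> 'a \<Rightarrow> bool) \<Rightarrow> 'a \<Rightarrow> 'a
     \<Rightarrow> ('a \<Rightarrow> 'a \<Rightarrow> 'a \<Rightarrow> bool) \<Rightarrow> bool" where
  "hybrid E PA PB x y PH \<longleftrightarrow>
     (\<forall>z. z \<noteq> x \<longrightarrow> PH z = PA z) \<and>
     strict_linear_on (nbrs E x) (PH x) \<and>
     (let PS = {z. PA x z y} \<union> {z. PB x z y} in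
       (\<forall>z\<in>nbrs E x. z \<in> PS \<longrightarrow> PH x z y) \<and>
       (\<forall>z\<in>nbrs E x. z \<notin> PS \<union> {y} \<longrightarrow> PH x y z))"

end

theory Submission
  imports Defs
begin

text \<open>Only the vote of x distinguishes the three instances. If M matches x to y, then x
prefers M' over M under the hybrid order exactly when x does so under one of the two
original orders, because the hybrid order ranks above y precisely the neighbours ranked
above y by either of them. Hence x's hybrid vote is the minimum of its two original votes,
and so the hybrid popularity margin of M is the minimum of the two original margins. A
margin is nonnegative (positive) iff both are, which gives both equivalences.\<close>

lemma partner_eqI:
  assumes "is_matching E M" "{x, y} \<in> M"
  shows "partner M x = y"
  unfolding partner_def
proof (rule the_equality)
  fix z assume z: "{x, z} \<in> M"
  have "{x, z} \<inter> {x, y} \<noteq> {}" by simp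
  with z assms have "{x, z} = {x, y}"
    unfolding is_matching_def by metis
  thus "z = y" by (metis doubleton_eq_iff)
qed (fact assms(2))

lemma matched_partner_in_matching:
  assumes "bip_graph W F E" "is_matching E M" "matched M x"
  shows "{x, partner M x} \<in> M"
proof -
  obtain e where e: "e \<in> M" "x \<in> e" using assms(3) unfolding matched_def by blast
  have "e \<in> E" using e(1) assms(2) unfolding is_matching_def by blast
  with assms(1) obtain w f where "e = {w, f}" unfolding bip_graph_def by blast
  with e obtain z where "e = {x, z}" by blast
  with e(1) have "{x, z} \<in> M" by simp
  thus ?thesis using partner_eqI[OF assms(2)] by simp
qed

lemma matched_partner_in_nbrs:
  assumes "bip_graph W F E" "is_matching E M" "matched M x"
  shows "partner M x \<in> nbrs E x"
  using matched_partner_in_matching[OF assms] assms(2)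
  unfolding nbrs_def is_matching_def by blast

lemma strict_linear_on_irrefl:
  "strict_linear_on S R \<Longrightarrow> a \<in> S \<Longrightarrow> \<not> R a a"
  unfolding strict_linear_on_def by blast

lemma strict_linear_on_asym_iff:
  assumes "strict_linear_on S R" "a \<in> S" "b \<in> S" "a \<noteq> b"
  shows "R a b \<longleftrightarrow> \<not> R b a"
  using assms unfolding strict_linear_on_def by metis

lemma vote_cong: "P z = Q z \<Longrightarrow> vote P z M M' = vote Q z M M'"
  unfolding vote_def prefers_def by simp

lemma hybrid_above_iff:
  assumes "hybrid E PA PB x y PH" "z \<in> nbrs E x" "y \<in> nbrs E x" "z \<noteq> y"
  shows "PH x z y \<longleftrightarrow> PA x z y \<or> PB x z y"
proof -
  have "strict_linear_on (nbrs E x) (PH x)" using assms(1) unfolding hybrid_def by blast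
  hence "PH x y z \<longleftrightarrow> \<not> PH x z y"
    using strict_linear_on_asym_iff assms(2-4) by metis
  with assms show ?thesis unfolding hybrid_def Let_def by auto
qed

lemma vote_min_if_above_iff:
  assumes sA: "strict_linear_on (nbrs E x) (PA x)"
    and sB: "strict_linear_on (nbrs E x) (PB x)"
    and sH: "strict_linear_on (nbrs E x) (PH x)"
    and above: "\<And>z. z \<in> nbrs E x \<Longrightarrow> z \<noteq> y \<Longrightarrow> PH x z y \<longleftrightarrow> PA x z y \<or> PB x z y"
    and y: "y \<in> nbrs E x"
    and M: "matched M x" "partner M x = y"
    and M': "matched M' x \<Longrightarrow> partner M' x \<in> nbrs E x"
  shows "vote PH x M M' = min (vote PA x M M') (vote PB x M M')"
proof (cases "matched M' x")
  case False
  with M show ?thesis unfolding vote_def prefers_def by simp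
next
  case True
  define z where "z = partner M' x"
  have z: "z \<in> nbrs E x" using M'[OF True] by (simp add: z_def)
  show ?thesis
  proof (cases "z = y")
    case True
    with \<open>matched M' x\<close> M y sA sB sH show ?thesis
      unfolding vote_def prefers_def z_def by (simp add: strict_linear_on_irrefl)
  next
    case False
    have "PA x y z \<longleftrightarrow> \<not> PA x z y" "PB x y z \<longleftrightarrow> \<not> PB x z y" "PH x y z \<longleftrightarrow> \<not> PH x z y"
      using strict_linear_on_asym_iff[OF sA y z] strict_linear_on_asym_iff[OF sB y z]
        strict_linear_on_asym_iff[OF sH y z] False by auto
    with above[OF z False] \<open>matched M' x\<close> M show ?thesis
      unfolding vote_def prefers_def z_def[symmetric] by auto
  qed
qed

lemma margin_remove:
  assumes "finite (W \<union> F)" "x \<in> W \<union> F"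
  shows "margin W F P M M' = vote P x M M' + (\<Sum>z\<in>(W \<union> F) - {x}. vote P z M M')"
  unfolding margin_def using sum.remove[OF assms] .

lemma margin_hybrid_eq_min:
  assumes iA: "matp_instance W F E PA"
    and iB: "matp_instance W F E PB"
    and eq: "\<forall>z. z \<noteq> x \<longrightarrow> PA z = PB z"
    and xy: "{x, y} \<in> E"
    and hyb: "hybrid E PA PB x y PH"
    and M: "is_matching E M" "{x, y} \<in> M"
    and M': "is_matching E M'"
  shows "margin W F PH M M' = min (margin W F PA M M') (margin W F PB M M')"
proof -
  have bg: "bip_graph W F E" using iA unfolding matp_instance_def by simp
  have fin: "finite (W \<union> F)" using bg unfolding bip_graph_def by simp
  have x: "x \<in> W \<union> F" using bg xy unfolding bip_graph_def by (metis Un_iff doubleton_eq_iff)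
  have y: "y \<in> nbrs E x" using xy unfolding nbrs_def by simp
  have vote_x: "vote PH x M M' = min (vote PA x M M') (vote PB x M M')"
  proof (rule vote_min_if_above_iff)
    show "strict_linear_on (nbrs E x) (PA x)" "strict_linear_on (nbrs E x) (PB x)"
      using iA iB x unfolding matp_instance_def by blast+
    show "strict_linear_on (nbrs E x) (PH x)" using hyb unfolding hybrid_def by blast
    show "PH x z y \<longleftrightarrow> PA x z y \<or> PB x z y" if "z \<in> nbrs E x" "z \<noteq> y" for z
      using hybrid_above_iff[OF hyb that(1) y that(2)] .
    show "matched M x" using M(2) unfolding matched_def by blast
    show "partner M x = y" using partner_eqI[OF M] .
    show "matched M' x \<Longrightarrow> partner M' x \<in> nbrs E x"
      using matched_partner_in_nbrs[OF bg M'] .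
  qed (fact y)
  have "vote PH z M M' = vote PA z M M'" "vote PB z M M' = vote PA z M M'"
    if "z \<in> (W \<union> F) - {x}" for z
    using that hyb eq unfolding hybrid_def by (auto intro: vote_cong)
  hence "(\<Sum>z\<in>(W \<union> F) - {x}. vote PH z M M') = (\<Sum>z\<in>(W \<union> F) - {x}. vote PA z M M')"
    "(\<Sum>z\<in>(W \<union> F) - {x}. vote PB z M M') = (\<Sum>z\<in>(W \<union> F) - {x}. vote PA z M M')"
    by (auto intro: sum.cong)
  with vote_x show ?thesis
    unfolding margin_remove[OF fin x, of PH] margin_remove[OF fin x, of PA]
      margin_remove[OF fin x, of PB] by simp
qed

lemma popular_iff_if_margin_min:
  assumes "\<And>M'. is_matching E M' \<Longrightarrow>
      margin W F PH M M' = min (margin W F PA M M') (margin W F PB M M')"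
  shows "popular W F E PH M \<longleftrightarrow> popular W F E PA M \<and> popular W F E PB M"
  using assms unfolding popular_def by (auto simp: min_def)

lemma dominant_iff_if_margin_min:
  assumes "\<And>M'. is_matching E M' \<Longrightarrow>
      margin W F PH M M' = min (margin W F PA M M') (margin W F PB M M')"
  shows "dominant W F E PH M \<longleftrightarrow> dominant W F E PA M \<and> dominant W F E PB M"
  using assms popular_iff_if_margin_min[OF assms] unfolding dominant_def
  by (auto simp: min_def)

theorem corollary1:
  fixes W F :: "'a set" and E :: "'a set set"
    and PA PB PH :: "'a \<Rightarrow> 'a \<Rightarrow> 'a \<Rightarrow> bool" and x y :: 'a
  assumes "matp_instance W F E PA"
    and "matp_instance W F E PB"
    and "\<forall>z. z \<noteq> x \<longrightarrow> PA z = PB z"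
    and "{x, y} \<in> E"
    and "hybrid E PA PB x y PH"
  shows "((\<exists>M. popular W F E PA M \<and> popular W F E PB M \<and> {x, y} \<in> M)
            \<longleftrightarrow> (\<exists>M. popular W F E PH M \<and> {x, y} \<in> M))
       \<and> ((\<exists>M. dominant W F E PA M \<and> dominant W F E PB M \<and> {x, y} \<in> M)
            \<longleftrightarrow> (\<exists>M. dominant W F E PH M \<and> {x, y} \<in> M))"
proof -
  have pop: "popular W F E PH M \<longleftrightarrow> popular W F E PA M \<and> popular W F E PB M"
    if "{x, y} \<in> M" for M
  proof (cases "is_matching E M")
    case True
    show ?thesis by (rule popular_iff_if_margin_min[OF margin_hybrid_eq_min[OF assms True that]])
  qed (simp add: popular_def)
  have dom: "dominant W F E PH M \<longleftrightarrow> dominant W F E PA M \<and> dominant W F E PB M"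
    if "{x, y} \<in> M" for M
  proof (cases "is_matching E M")
    case True
    show ?thesis by (rule dominant_iff_if_margin_min[OF margin_hybrid_eq_min[OF assms True that]])
  qed (simp add: dominant_def popular_def)
  show ?thesis using pop dom by blast
qed

end
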